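(* Let $F$ be a field of characteristic $0$, $d\ge1$, $k\le d^2$, and let $f(x_1,\dots,x_k)\in F\langle X\rangle^{\otimes n}$ be a tensor polynomial that is multilinear and antisymmetric in $x_1,\dots,x_k$. Define the tensor polynomial in $d^2$ variables $$\Phi(x_1,\dots,x_{d^2}):=Alt_{x_1,\dots,x_{d^2}}\big(f(x_1,\dots,x_k)\otimes x_{k+1}\otimes x_{k+2}\otimes\cdots\otimes x_{d^2}\big)\in F\langle X\rangle^{\otimes(n+d^2-k)}.$$ Then $f$ is not identically zero when evaluated on $d\times d$ matrices $M_d(F)$ if and only if $\Phi$ is not identically zero when evaluated on $M_d(F)$.
   Context: $F\langle X\rangle$ is the free associative algebra in $x_1,x_2,\dots$; tensor polynomials are evaluated on matrices via the algebra homomorphism induced by $x_i\mapsto A_i\in M_d(F)$. $Alt_{x_1,\dots,x_m}G:=\sum_{\sigma\in S_m}\epsilon_\sigma G(x_{\sigma(1)},\dots,x_{\sigma(m)})$. *)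

theory Defs
  imports "HOL-Analysis.Analysis"
begin

text \<open>A monomial of the free algebra F<X> in variables
  x_0, x_1, ... is a word (nat list). A (pure) monomial tensor in F<X>^{(x)n} is a
  list of n words. A tensor polynomial is a coefficient function on lists of words
  (with finite support); it lies in F<X>^{(x)n} if its support consists of lists of
  length n. Variable x_{i+1} of the paper is variable i here (0-indexed).\<close>

type_synonym 'a tpoly = "nat list list \<Rightarrow> 'a"

definition tsupp :: "'a::zero tpoly \<Rightarrow> nat list list set" where
  "tsupp f = {ws. f ws \<noteq> 0}"

definition is_tpoly :: "nat \<Rightarrow> 'a::zero tpoly \<Rightarrow> bool" where
  "is_tpoly n f \<longleftrightarrow> finite (tsupp f) \<and> (\<forall>ws\<in>tsupp f. length ws = n)"

definition vars_in :: "nat set \<Rightarrow> 'a::zero tpoly \<Rightarrow> bool" where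
  "vars_in V f \<longleftrightarrow> (\<forall>ws\<in>tsupp f. \<forall>w\<in>set ws. set w \<subseteq> V)"

definition multilinear_in :: "nat \<Rightarrow> 'a::zero tpoly \<Rightarrow> bool" where
  "multilinear_in k f \<longleftrightarrow> (\<forall>ws\<in>tsupp f. \<forall>i<k. count_list (concat ws) i = 1)"

text \<open>Substitution x_i \<mapsto> x_{\<sigma> i} for a bijection \<sigma>, i.e. G(x_{\<sigma>(0)},x_{\<sigma>(1)},...).
  The monomial tensor ws is sent to map (map \<sigma>) ws.\<close>
definition rename :: "(nat \<Rightarrow> nat) \<Rightarrow> 'a tpoly \<Rightarrow> 'a tpoly" where
  "rename \<sigma> f = (\<lambda>ws. f (map (map (inv \<sigma>)) ws))"

definition antisym_in :: "nat \<Rightarrow> 'a::comm_ring_1 tpoly \<Rightarrow> bool" where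
  "antisym_in k f \<longleftrightarrow>
     (\<forall>\<sigma>. \<sigma> permutes {..<k} \<longrightarrow> rename \<sigma> f = (\<lambda>ws. of_int (sign \<sigma>) * f ws))"

definition Alt :: "nat \<Rightarrow> 'a::comm_ring_1 tpoly \<Rightarrow> 'a tpoly" where
  "Alt m G = (\<lambda>ws. \<Sum>\<sigma>\<in>{\<sigma>. \<sigma> permutes {..<m}}. of_int (sign \<sigma>) * rename \<sigma> G ws)"

text \<open>f \<otimes> t_1 \<otimes> ... \<otimes> t_r for monomials t_1,...,t_r (given as the list T)\<close>
definition tensor_monos :: "'a::zero tpoly \<Rightarrow> nat list list \<Rightarrow> 'a tpoly" where
  "tensor_monos f T = (\<lambda>ws. if length T \<le> length ws \<and> drop (length ws - length T) ws = T
                             then f (take (length ws - length T) ws) else 0)"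

definition Phi :: "nat \<Rightarrow> nat \<Rightarrow> 'a::comm_ring_1 tpoly \<Rightarrow> 'a tpoly" where
  "Phi m k f = Alt m (tensor_monos f (map (\<lambda>i. [i]) [k..<m]))"

definition word_eval :: "(nat \<Rightarrow> 'a::comm_ring_1^'d^'d) \<Rightarrow> nat list \<Rightarrow> 'a^'d^'d" where
  "word_eval A w = foldr (\<lambda>i M. A i ** M) w (mat 1)"

text \<open>Evaluation of a tensor polynomial on matrices, as an element of
  M_d(F)^{(x)n}, represented by its coordinates w.r.t. the basis of tensor products of
  matrix units: coordinate at [(i_1,j_1),...,(i_n,j_n)].\<close>
definition teval :: "(nat \<Rightarrow> 'a::comm_ring_1^'d^'d) \<Rightarrow> 'a tpoly \<Rightarrow> ('d \<times> 'd) list \<Rightarrow> 'a" where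
  "teval A f = (\<lambda>ij. \<Sum>ws\<in>tsupp f. f ws *
      (if length ws = length ij
       then prod_list (map2 (\<lambda>w (i, j). word_eval A w $ i $ j) ws ij) else 0))"

end

theory Submission
  imports Defs
begin

text \<open>
  Evaluated on matrices, \<open>Phi\<close> is a signed sum, over the permutations \<open>\<sigma>\<close> of the
  \<open>d\<^sup>2\<close> variables, of evaluations of \<open>f\<close> tensored with the trailing variables at permuted
  arguments, and each coordinate of such an evaluation is a coordinate of an evaluation of
  \<open>f\<close> times matrix entries. So if \<open>f\<close> vanishes on \<open>M\<^sub>d(F)\<close>, so does \<open>Phi\<close>.

  Conversely, suppose \<open>f\<close> does not vanish. A linear form on \<open>M\<^sub>d(F)\<close> that is nonzero
  somewhere is nonzero at a matrix unit, so by multilinearity we may evaluate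
  \<open>x\<^sub>1, \<dots>, x\<^sub>k\<close> at matrix units, and by antisymmetry these are pairwise distinct. Send the
  trailing variables to the remaining \<open>d\<^sup>2 - k\<close> matrix units and read off the
  coordinate of \<open>Phi\<close> whose trailing indices are exactly these units. Only the permutations
  fixing every trailing variable contribute, i.e. \<open>\<sigma> \<in> S\<^sub>k\<close>, each with
  \<open>sign \<sigma> \<cdot> sign \<sigma> = 1\<close> times the value of \<open>f\<close>. That coordinate is therefore \<open>k!\<close> times
  a nonzero value of \<open>f\<close>, hence nonzero in characteristic 0.
\<close>

section \<open>Evaluation of tensor polynomials\<close>

definition tmono_eval :: "(nat \<Rightarrow> 'a::comm_ring_1^'d^'d) \<Rightarrow> nat list list \<Rightarrow> ('d \<times> 'd) list \<Rightarrow> 'a" where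
  "tmono_eval A ws ij = (if length ws = length ij
       then prod_list (map2 (\<lambda>w (i, j). word_eval A w $ i $ j) ws ij) else 0)"

lemma teval_eq_sum_tmono_eval: "teval A f ij = (\<Sum>ws\<in>tsupp f. f ws * tmono_eval A ws ij)"
  unfolding teval_def tmono_eval_def by simp

lemma tmono_eval_Nil [simp]: "tmono_eval A [] [] = 1"
  by (simp add: tmono_eval_def)

lemma tmono_eval_Cons [simp]:
  "tmono_eval A (w # ws) ((p, q) # ij) = word_eval A w $ p $ q * tmono_eval A ws ij"
  by (simp add: tmono_eval_def)

lemma tmono_eval_append:
  assumes "length ws' = length ij'"
  shows "tmono_eval A (ws @ ws') (ij @ ij') = tmono_eval A ws ij * tmono_eval A ws' ij'"
  using assms by (simp add: tmono_eval_def)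

lemma word_eval_Cons [simp]: "word_eval A (i # w) = A i ** word_eval A w"
  by (simp add: word_eval_def)

lemma word_eval_cong: "(\<And>i. i \<in> set w \<Longrightarrow> A i = B i) \<Longrightarrow> word_eval A w = word_eval B w"
  by (induction w) (simp_all add: word_eval_def)

lemma word_eval_map: "word_eval A (map \<sigma> w) = word_eval (A \<circ> \<sigma>) w"
  by (induction w) (simp_all add: word_eval_def)

lemma tmono_eval_map: "tmono_eval A (map (map \<sigma>) ws) ij = tmono_eval (A \<circ> \<sigma>) ws ij"
proof -
  have "map2 (\<lambda>w (i, j). word_eval A w $ i $ j) (map (map \<sigma>) ws) ij =
        map2 (\<lambda>w (i, j). word_eval (A \<circ> \<sigma>) w $ i $ j) ws ij"
  proof (induction ws arbitrary: ij)
    case (Cons w ws)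
    then show ?case by (cases ij) (auto simp: word_eval_map o_def)
  qed simp
  then show ?thesis by (simp add: tmono_eval_def)
qed

lemma tmono_eval_cong:
  assumes "\<And>w i. w \<in> set ws \<Longrightarrow> i \<in> set w \<Longrightarrow> A i = B i"
  shows "tmono_eval A ws ij = tmono_eval B ws ij"
proof -
  have "\<forall>w\<in>set ws. word_eval A w = word_eval B w"
    using assms word_eval_cong by metis
  then have "map2 (\<lambda>w (i, j). word_eval A w $ i $ j) ws ij = map2 (\<lambda>w (i, j). word_eval B w $ i $ j) ws ij"
    by (intro map_cong[OF refl]) (auto dest!: set_zip_leftD)
  then show ?thesis
    unfolding tmono_eval_def by (rule arg_cong)
qed

lemma teval_eq_sum_superset:
  assumes "finite S" "tsupp f \<subseteq> S"
  shows "teval A f ij = (\<Sum>ws\<in>S. f ws * tmono_eval A ws ij)"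
  unfolding teval_eq_sum_tmono_eval
  by (rule sum.mono_neutral_left) (use assms in \<open>auto simp: tsupp_def\<close>)

lemma teval_lincomb:
  assumes "finite I" "\<And>s. s \<in> I \<Longrightarrow> finite (tsupp (g s))"
  shows "teval A (\<lambda>ws. \<Sum>s\<in>I. c s * g s ws) ij = (\<Sum>s\<in>I. c s * teval A (g s) ij)"
proof -
  define S where "S = (\<Union>s\<in>I. tsupp (g s))"
  have S: "finite S" "\<And>s. s \<in> I \<Longrightarrow> tsupp (g s) \<subseteq> S"
    using assms by (auto simp: S_def)
  have "tsupp (\<lambda>ws. \<Sum>s\<in>I. c s * g s ws) \<subseteq> S"
    unfolding S_def tsupp_def by (auto intro: ccontr)
  then have "teval A (\<lambda>ws. \<Sum>s\<in>I. c s * g s ws) ij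
      = (\<Sum>ws\<in>S. (\<Sum>s\<in>I. c s * g s ws) * tmono_eval A ws ij)"
    using teval_eq_sum_superset S(1) by blast
  also have "\<dots> = (\<Sum>s\<in>I. c s * (\<Sum>ws\<in>S. g s ws * tmono_eval A ws ij))"
    by (simp add: sum_distrib_right sum_distrib_left mult.assoc) (rule sum.swap)
  also have "\<dots> = (\<Sum>s\<in>I. c s * teval A (g s) ij)"
    using S by (simp add: teval_eq_sum_superset)
  finally show ?thesis .
qed

lemma teval_cmult:
  assumes "finite (tsupp g)"
  shows "teval A (\<lambda>ws. c * g ws) ij = c * teval A g ij"
  using teval_lincomb[of "{()}" "\<lambda>_. g" A "\<lambda>_. c" ij] assms by simp

lemma teval_cong_vars:
  assumes "vars_in V f" "\<And>i. i \<in> V \<Longrightarrow> A i = B i"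
  shows "teval A f = teval B f"
proof
  fix ij
  have "tmono_eval A ws ij = tmono_eval B ws ij" if "ws \<in> tsupp f" for ws
    using that assms by (intro tmono_eval_cong) (auto simp: vars_in_def)
  then show "teval A f ij = teval B f ij"
    by (simp add: teval_eq_sum_tmono_eval)
qed

lemma tsupp_rename:
  assumes "bij \<sigma>"
  shows "tsupp (rename \<sigma> G) = map (map \<sigma>) ` tsupp G"
proof -
  have inv: "inv \<sigma> (\<sigma> x) = x" "\<sigma> (inv \<sigma> x) = x" for x
    using assms by (auto simp: bij_def surj_f_inv_f)
  then have id: "inv \<sigma> \<circ> \<sigma> = id" by auto
  have m1: "map (map (inv \<sigma>)) (map (map \<sigma>) ws) = ws" for ws
    by (simp add: id)
  have m2: "map (map \<sigma>) (map (map (inv \<sigma>)) ws) = ws" for ws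
    by (simp add: inv map_idI)
  show ?thesis
    unfolding tsupp_def rename_def by (auto simp: m1 id image_iff) (metis m2)
qed

lemma teval_rename:
  assumes "bij \<sigma>" "finite (tsupp G)"
  shows "teval B (rename \<sigma> G) ij = teval (B \<circ> \<sigma>) G ij"
proof -
  have "inv \<sigma> \<circ> \<sigma> = id"
    using assms by (auto simp: bij_def)
  moreover have "inj (map (map \<sigma>))"
    using assms by (simp add: bij_is_inj inj_mapI)
  ultimately show ?thesis
    unfolding teval_eq_sum_tmono_eval tsupp_rename[OF assms(1)]
    by (subst sum.reindex) (auto intro: inj_on_subset simp: rename_def tmono_eval_map)
qed

lemma teval_comp_permutes:
  assumes "antisym_in k f" "finite (tsupp f)" "\<sigma> permutes {..<k}"
  shows "teval (A \<circ> \<sigma>) f ij = of_int (sign \<sigma>) * teval A f ij"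
proof -
  have "teval (A \<circ> \<sigma>) f ij = teval A (rename \<sigma> f) ij"
    by (rule teval_rename[OF permutes_bij[OF assms(3)] assms(2), symmetric])
  also have "\<dots> = of_int (sign \<sigma>) * teval A f ij"
    using assms by (simp add: antisym_in_def teval_cmult)
  finally show ?thesis .
qed

lemma teval_eq_0_if_vars_coincide:
  fixes f :: "'a::{idom, ring_char_0} tpoly"
  assumes "antisym_in k f" "finite (tsupp f)" "i < k" "i' < k" "i \<noteq> i'" "A i = A i'"
  shows "teval A f ij = 0"
proof -
  let ?\<tau> = "Transposition.transpose i i'"
  have "A \<circ> ?\<tau> = A"
    using assms(6) by (auto simp: Transposition.transpose_def)
  then have "teval A f ij = teval (A \<circ> ?\<tau>) f ij"
    by simp
  also have "\<dots> = of_int (sign ?\<tau>) * teval A f ij"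
    using assms(3,4) by (intro teval_comp_permutes[OF assms(1,2)] permutes_swap_id) auto
  also have "sign ?\<tau> = -1"
    using assms(5) by (simp add: sign_swap_id)
  finally show ?thesis
    by simp
qed

section \<open>Tensoring with monomials\<close>

lemma tsupp_tensor_monos: "tsupp (tensor_monos f T) = (\<lambda>u. u @ T) ` tsupp f"
proof -
  have "ws \<in> (\<lambda>u. u @ T) ` tsupp f" if "ws \<in> tsupp (tensor_monos f T)" for ws
  proof -
    let ?u = "take (length ws - length T) ws"
    from that have "drop (length ws - length T) ws = T" "f ?u \<noteq> 0"
      unfolding tsupp_def tensor_monos_def by (auto split: if_splits)
    then have "ws = ?u @ T" "?u \<in> tsupp f"
      unfolding tsupp_def by (metis append_take_drop_id, simp)
    then show ?thesis by blast
  qed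
  moreover have "u @ T \<in> tsupp (tensor_monos f T)" if "u \<in> tsupp f" for u
    using that unfolding tsupp_def tensor_monos_def by simp
  ultimately show ?thesis by blast
qed

lemma teval_tensor_monos:
  assumes "finite (tsupp f)" "length ij' = length T"
  shows "teval A (tensor_monos f T) (ij @ ij') = teval A f ij * tmono_eval A T ij'"
proof -
  have "inj_on (\<lambda>u. u @ T) X" for X
    by (auto simp: inj_on_def)
  moreover have "tensor_monos f T (u @ T) = f u" for u
    by (simp add: tensor_monos_def)
  ultimately show ?thesis
    unfolding teval_eq_sum_tmono_eval tsupp_tensor_monos using assms(2)
    by (subst sum.reindex) (simp_all add: tmono_eval_append sum_distrib_right mult.assoc)
qed

lemma teval_tensor_monos_eq_0:
  assumes "finite (tsupp f)" "teval A f = (\<lambda>_. 0)"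
  shows "teval A (tensor_monos f T) ij = 0"
proof (cases "length ij < length T")
  case True
  then show ?thesis
    unfolding teval_eq_sum_tmono_eval tsupp_tensor_monos
    by (intro sum.neutral) (auto simp: tmono_eval_def)
next
  case False
  let ?l = "length ij - length T"
  have "teval A (tensor_monos f T) (take ?l ij @ drop ?l ij) = 0"
    using False assms by (subst teval_tensor_monos) simp_all
  then show ?thesis by simp
qed

lemma teval_Phi:
  assumes "finite (tsupp f)"
  shows "teval B (Phi m k f) ij = (\<Sum>\<sigma>\<in>{\<sigma>. \<sigma> permutes {..<m}}. of_int (sign \<sigma>) *
      teval (B \<circ> \<sigma>) (tensor_monos f (map (\<lambda>i. [i]) [k..<m])) ij)"
proof -
  let ?G = "tensor_monos f (map (\<lambda>i. [i]) [k..<m])"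
  have G: "finite (tsupp ?G)"
    using assms by (simp add: tsupp_tensor_monos)
  then have "finite (tsupp (rename \<sigma> ?G))" if "\<sigma> permutes {..<m}" for \<sigma>
    using permutes_bij[OF that] by (simp add: tsupp_rename)
  then show ?thesis
    unfolding Phi_def Alt_def
    by (subst teval_lincomb) (auto simp: finite_permutations teval_rename[OF permutes_bij G])
qed

lemma teval_Phi_eq_0:
  fixes B :: "nat \<Rightarrow> 'a::comm_ring_1^'d^'d"
  assumes "finite (tsupp f)" "\<forall>A :: nat \<Rightarrow> 'a^'d^'d. teval A f = (\<lambda>_. 0)"
  shows "teval B (Phi m k f) = (\<lambda>_. 0)"
  using assms by (simp add: fun_eq_iff teval_Phi teval_tensor_monos_eq_0[OF assms(1)])

section \<open>Multilinearity and matrix units\<close>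

definition matrix_unit :: "'d \<times> 'd \<Rightarrow> 'a::zero_neq_one^'d^'d" where
  "matrix_unit pq = (\<chi> r s. if (r, s) = pq then 1 else 0)"

lemma matrix_unit_nth [simp]: "matrix_unit pq $ r $ s = (if (r, s) = pq then 1 else 0)"
  by (simp add: matrix_unit_def)

definition linear_form :: "('a::comm_ring_1^'d^'d \<Rightarrow> 'a) \<Rightarrow> bool" where
  "linear_form F \<longleftrightarrow> (\<exists>C. \<forall>X. F X = (\<Sum>a\<in>UNIV. \<Sum>b\<in>UNIV. C a b * X $ a $ b))"

lemma linear_form_0: "linear_form (\<lambda>X. 0)"
  unfolding linear_form_def by (intro exI[of _ "\<lambda>_ _. 0"]) simp

lemma linear_form_add:
  assumes "linear_form F" "linear_form G"
  shows "linear_form (\<lambda>X. F X + G X)"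
proof -
  obtain C D where "\<And>X. F X = (\<Sum>a\<in>UNIV. \<Sum>b\<in>UNIV. C a b * X $ a $ b)"
    "\<And>X. G X = (\<Sum>a\<in>UNIV. \<Sum>b\<in>UNIV. D a b * X $ a $ b)"
    using assms unfolding linear_form_def by blast
  then show ?thesis
    unfolding linear_form_def
    by (intro exI[of _ "\<lambda>a b. C a b + D a b"]) (simp add: distrib_right sum.distrib)
qed

lemma linear_form_cmult:
  assumes "linear_form F"
  shows "linear_form (\<lambda>X. c * F X)"
proof -
  obtain C where "\<And>X. F X = (\<Sum>a\<in>UNIV. \<Sum>b\<in>UNIV. C a b * X $ a $ b)"
    using assms unfolding linear_form_def by blast
  then show ?thesis
    unfolding linear_form_def
    by (intro exI[of _ "\<lambda>a b. c * C a b"]) (simp add: sum_distrib_left mult.assoc)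
qed

lemma linear_form_sum:
  "finite S \<Longrightarrow> (\<And>s. s \<in> S \<Longrightarrow> linear_form (F s)) \<Longrightarrow> linear_form (\<lambda>X. \<Sum>s\<in>S. F s X)"
  by (induction S rule: finite_induct) (auto intro: linear_form_0 linear_form_add)

lemma linear_form_matrix_mult_entry: "linear_form (\<lambda>X. (L ** X ** R) $ p $ q)"
proof -
  have "(L ** X ** R) $ p $ q = (\<Sum>a\<in>UNIV. \<Sum>b\<in>UNIV. (L $ p $ a * R $ b $ q) * X $ a $ b)" for X
    by (simp add: matrix_matrix_mult_def sum_distrib_right sum_distrib_left mult_ac) (rule sum.swap)
  then show ?thesis
    unfolding linear_form_def by (intro exI[of _ "\<lambda>a b. L $ p $ a * R $ b $ q"]) simp
qed

lemma linear_form_nonzero_at_matrix_unit: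
  assumes "linear_form F" "F X \<noteq> 0"
  shows "\<exists>pq. F (matrix_unit pq) \<noteq> 0"
proof -
  obtain C where C: "\<And>X. F X = (\<Sum>a\<in>UNIV. \<Sum>b\<in>UNIV. C a b * X $ a $ b)"
    using assms(1) unfolding linear_form_def by blast
  have "\<exists>a b. C a b \<noteq> 0"
  proof (rule ccontr)
    assume "\<not> ?thesis"
    then show False using assms(2) C by simp
  qed
  then obtain a b where "C a b \<noteq> 0"
    by blast
  have row: "(\<Sum>b'\<in>UNIV. if a' = a \<and> b' = b then C a b else 0) = (if a' = a then C a b else 0)" for a'
    by (cases "a' = a") simp_all
  have "F (matrix_unit (a, b)) = C a b"
    unfolding C by (simp add: if_distrib row cong: if_cong)
  with \<open>C a b \<noteq> 0\<close> show ?thesis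
    by (intro exI[of _ "(a, b)"]) simp
qed

lemma word_eval_single_occurrence:
  assumes "count_list w j = 1"
  shows "\<exists>L R. \<forall>X. word_eval (A(j := X)) w = L ** X ** R"
  using assms
proof (induction w)
  case (Cons i w)
  show ?case
  proof (cases "i = j")
    case True
    with Cons.prems have "j \<notin> set w"
      by (simp add: count_list_0_iff)
    then have "word_eval (A(j := X)) w = word_eval A w" for X
      by (intro word_eval_cong) auto
    then have "word_eval (A(j := X)) (i # w) = mat 1 ** X ** word_eval A w" for X
      using True by simp
    then show ?thesis by blast
  next
    case False
    with Cons.prems have "count_list w j = 1"
      by simp
    then obtain L R where "\<forall>X. word_eval (A(j := X)) w = L ** X ** R"
      using Cons.IH by blast
    then have "word_eval (A(j := X)) (i # w) = (A i ** L) ** X ** R" for X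
      using False by (simp add: matrix_mul_assoc)
    then show ?thesis by blast
  qed
qed simp

lemma linear_form_tmono_eval:
  assumes "count_list (concat ws) j = 1"
  shows "linear_form (\<lambda>X. tmono_eval (A(j := X)) ws ij)"
  using assms
proof (induction ws arbitrary: ij)
  case (Cons w ws)
  show ?case
  proof (cases ij)
    case Nil
    then show ?thesis by (simp add: tmono_eval_def linear_form_0)
  next
    case (Cons pq ij')
    obtain p q where ij: "ij = (p, q) # ij'"
      using Cons by (cases pq) simp
    show ?thesis
    proof (cases "j \<in> set w")
      case False
      then have "word_eval (A(j := X)) w = word_eval A w" for X
        by (intro word_eval_cong) auto
      moreover have "count_list (concat ws) j = 1"
        using Cons.prems False by (simp add: count_list_0_iff)
      then have "linear_form (\<lambda>X. tmono_eval (A(j := X)) ws ij')"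
        by (rule Cons.IH)
      ultimately show ?thesis
        unfolding ij by (simp del: fun_upd_apply add: linear_form_cmult)
    next
      case True
      then have "count_list w j \<noteq> 0"
        by (simp add: count_list_0_iff)
      with Cons.prems have w: "count_list w j = 1" and "count_list (concat ws) j = 0"
        by auto
      then have "\<forall>u\<in>set ws. j \<notin> set u"
        by (simp add: count_list_0_iff)
      then have "tmono_eval (A(j := X)) ws ij' = tmono_eval A ws ij'" for X
        by (intro tmono_eval_cong) auto
      moreover obtain L R where "\<forall>X. word_eval (A(j := X)) w = L ** X ** R"
        using word_eval_single_occurrence[OF w] by blast
      ultimately show ?thesis
        unfolding ij
        by (simp del: fun_upd_apply add: mult.commute[of _ "tmono_eval A ws ij'"]
            linear_form_cmult linear_form_matrix_mult_entry)
    qed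
  qed
qed simp

lemma linear_form_teval:
  assumes "finite (tsupp f)" "multilinear_in k f" "j < k"
  shows "linear_form (\<lambda>X. teval (A(j := X)) f ij)"
  unfolding teval_eq_sum_tmono_eval
proof (rule linear_form_sum[OF assms(1)])
  fix ws
  assume "ws \<in> tsupp f"
  then have "count_list (concat ws) j = 1"
    using assms(2,3) by (simp add: multilinear_in_def)
  then show "linear_form (\<lambda>X. f ws * tmono_eval (A(j := X)) ws ij)"
    by (intro linear_form_cmult linear_form_tmono_eval)
qed

lemma teval_nonzero_at_matrix_units:
  assumes "finite (tsupp f)" "multilinear_in k f" "teval A f ij \<noteq> 0"
  shows "\<exists>c. teval (\<lambda>i. if i < k then matrix_unit (c i) else A i) f ij \<noteq> 0"
proof -
  have "\<exists>c. teval (\<lambda>i. if i < j then matrix_unit (c i) else A i) f ij \<noteq> 0" if "j \<le> k" for j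
    using that
  proof (induction j)
    case 0
    then show ?case using assms(3) by simp
  next
    case (Suc j)
    then obtain c where c: "teval (\<lambda>i. if i < j then matrix_unit (c i) else A i) f ij \<noteq> 0"
      by (metis Suc_leD)
    define A' where "A' = (\<lambda>i. if i < j then matrix_unit (c i) else A i)"
    have "linear_form (\<lambda>X. teval (A'(j := X)) f ij)"
      using Suc.prems by (intro linear_form_teval[OF assms(1,2)]) simp
    moreover have "teval (A'(j := A' j)) f ij \<noteq> 0"
      using c unfolding A'_def[symmetric] by simp
    ultimately obtain pq where "teval (A'(j := matrix_unit pq)) f ij \<noteq> 0"
      using linear_form_nonzero_at_matrix_unit by blast
    moreover have "A'(j := matrix_unit pq) =
        (\<lambda>i. if i < Suc j then matrix_unit ((c(j := pq)) i) else A i)"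
      by (auto simp: A'_def fun_eq_iff)
    ultimately show ?case
      by (intro exI[of _ "c(j := pq)"]) simp
  qed
  then show ?thesis by blast
qed

section \<open>Evaluation of \<open>Phi\<close> at distinct matrix units\<close>

lemma inj_on_extend_into:
  assumes c: "inj_on c K" "c ` K \<subseteq> B" and K: "K \<subseteq> M" and fin: "finite M" "finite B"
    and card: "card M \<le> card B"
  shows "\<exists>\<beta>. inj_on \<beta> M \<and> \<beta> ` M \<subseteq> B \<and> (\<forall>i\<in>K. \<beta> i = c i)"
proof -
  have "finite K" using K fin finite_subset by blast
  then have "card (M - K) \<le> card (B - c ` K)"
    using c K card by (simp add: card_Diff_subset card_image)
  then obtain \<gamma> where \<gamma>: "inj_on \<gamma> (M - K)" "\<gamma> ` (M - K) \<subseteq> B - c ` K"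
    using card_le_inj fin by (meson finite_Diff)
  define \<beta> where "\<beta> i = (if i \<in> K then c i else \<gamma> i)" for i
  have "inj_on \<beta> K" "inj_on \<beta> (M - K)"
    using c \<gamma> by (auto simp: \<beta>_def inj_on_def)
  moreover have "\<beta> ` K \<inter> \<beta> ` (M - K) = {}"
    using \<gamma> by (auto simp: \<beta>_def)
  ultimately have "inj_on \<beta> (K \<union> (M - K))"
    unfolding inj_on_Un by auto
  moreover have "K \<union> (M - K) = M"
    using K by blast
  ultimately show ?thesis
    using c \<gamma> K by (intro exI[of _ \<beta>]) (auto simp: \<beta>_def)
qed

lemma tmono_eval_singletons:
  "tmono_eval A (map (\<lambda>i. [i]) is) (map \<beta> is) = (\<Prod>i\<leftarrow>is. A i $ fst (\<beta> i) $ snd (\<beta> i))"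
proof (induction "is")
  case (Cons i "is")
  then show ?case
    by (cases "\<beta> i") (simp add: word_eval_def)
qed simp

lemma tmono_eval_trailing_matrix_units:
  fixes \<beta> :: "nat \<Rightarrow> 'd::finite \<times> 'd"
  assumes "inj_on \<beta> {..<m}" "\<sigma> permutes {..<m}"
  shows "tmono_eval (matrix_unit \<circ> \<beta> \<circ> \<sigma> :: nat \<Rightarrow> 'a::comm_ring_1^'d^'d) (map (\<lambda>i. [i]) [k..<m]) (map \<beta> [k..<m])
    = (if \<sigma> permutes {..<k} then 1 else 0)"
proof -
  have "tmono_eval (matrix_unit \<circ> \<beta> \<circ> \<sigma> :: nat \<Rightarrow> 'a^'d^'d) (map (\<lambda>i. [i]) [k..<m]) (map \<beta> [k..<m])
      = (\<Prod>i\<in>{k..<m}. if \<beta> i = \<beta> (\<sigma> i) then 1 else 0)"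
    by (simp add: tmono_eval_singletons prod.distinct_set_conv_list[symmetric])
  also have "\<dots> = (\<Prod>i\<in>{k..<m}. if \<sigma> i = i then 1 else 0)"
  proof (rule prod.cong[OF refl])
    fix i
    assume i: "i \<in> {k..<m}"
    then have "\<sigma> i < m"
      using permutes_in_image[OF assms(2)] by simp
    then have "\<beta> i = \<beta> (\<sigma> i) \<longleftrightarrow> \<sigma> i = i"
      using i assms(1) by (auto simp: inj_on_eq_iff)
    then show "(if \<beta> i = \<beta> (\<sigma> i) then 1 else 0) = (if \<sigma> i = i then 1 else (0::'a))"
      by simp
  qed
  also have "\<dots> = (if \<forall>i\<in>{k..<m}. \<sigma> i = i then 1 else 0)"
  proof (cases "\<forall>i\<in>{k..<m}. \<sigma> i = i")
    case False
    then have "(\<Prod>i\<in>{k..<m}. if \<sigma> i = i then 1 else 0) = (0::'a)"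
      by (intro prod_zero) auto
    with False show ?thesis
      by simp
  qed simp
  also have "(\<forall>i\<in>{k..<m}. \<sigma> i = i) \<longleftrightarrow> \<sigma> permutes {..<k}"
    using permutes_superset[OF assms(2), of "{..<k}"] permutes_not_in[of \<sigma> "{..<k}"] by auto
  finally show ?thesis .
qed

lemma teval_Phi_at_matrix_units:
  fixes f :: "'a::comm_ring_1 tpoly" and \<beta> :: "nat \<Rightarrow> 'd::finite \<times> 'd"
  assumes "antisym_in k f" "finite (tsupp f)" "k \<le> m" "inj_on \<beta> {..<m}"
  shows "teval (matrix_unit \<circ> \<beta>) (Phi m k f) (ij @ map \<beta> [k..<m])
    = of_nat (fact k) * teval (matrix_unit \<circ> \<beta>) f ij"
proof -
  let ?B = "matrix_unit \<circ> \<beta> :: nat \<Rightarrow> 'a^'d^'d"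
  let ?T = "map (\<lambda>i. [i]) [k..<m]"
  have "of_int (sign \<sigma>) * teval (?B \<circ> \<sigma>) (tensor_monos f ?T) (ij @ map \<beta> [k..<m])
      = (if \<sigma> permutes {..<k} then teval ?B f ij else 0)" if "\<sigma> permutes {..<m}" for \<sigma>
  proof -
    have "teval (?B \<circ> \<sigma>) (tensor_monos f ?T) (ij @ map \<beta> [k..<m])
        = teval (?B \<circ> \<sigma>) f ij * (if \<sigma> permutes {..<k} then 1 else 0)"
      using assms(2,4) that by (simp add: teval_tensor_monos tmono_eval_trailing_matrix_units)
    moreover have "of_int (sign \<sigma>) * of_int (sign \<sigma>) = (1::'a)"
      by (simp flip: of_int_mult)
    ultimately show ?thesis
      using assms(1,2) by (simp add: teval_comp_permutes mult.assoc[symmetric])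
  qed
  then have "teval ?B (Phi m k f) (ij @ map \<beta> [k..<m])
      = (\<Sum>\<sigma>\<in>{\<sigma>. \<sigma> permutes {..<m}}. if \<sigma> \<in> {\<sigma>. \<sigma> permutes {..<k}} then teval ?B f ij else 0)"
    by (simp add: teval_Phi[OF assms(2)])
  also have "\<dots> = (\<Sum>\<sigma>\<in>{\<sigma>. \<sigma> permutes {..<m}} \<inter> {\<sigma>. \<sigma> permutes {..<k}}. teval ?B f ij)"
    by (rule sum.inter_restrict[symmetric]) (simp add: finite_permutations)
  also have "{\<sigma>. \<sigma> permutes {..<m}} \<inter> {\<sigma>. \<sigma> permutes {..<k}} = {\<sigma>. \<sigma> permutes {..<k}}"
    using assms(3) by (auto intro: permutes_subset)
  finally show ?thesis
    by (simp add: card_permutations comp_def)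
qed

lemma teval_Phi_nonzero:
  fixes f :: "'a::field_char_0 tpoly" and A :: "nat \<Rightarrow> 'a^'d::finite^'d"
  assumes "k \<le> CARD('d)^2" "finite (tsupp f)" "vars_in {..<k} f" "multilinear_in k f"
    "antisym_in k f" "teval A f ij \<noteq> 0"
  shows "\<exists>\<beta>. teval (matrix_unit \<circ> \<beta>) (Phi (CARD('d)^2) k f) (ij @ map \<beta> [k..<CARD('d)^2]) \<noteq> 0"
proof -
  obtain c where "teval (\<lambda>i. if i < k then matrix_unit (c i) else A i) f ij \<noteq> 0"
    using teval_nonzero_at_matrix_units assms(2,4,6) by blast
  moreover have "teval (matrix_unit \<circ> c) f = teval (\<lambda>i. if i < k then matrix_unit (c i) else A i) f"
    by (rule teval_cong_vars[OF assms(3)]) simp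
  ultimately have c: "teval (matrix_unit \<circ> c) f ij \<noteq> 0"
    by simp
  have inj: "inj_on c {..<k}"
  proof (rule inj_onI)
    fix i i'
    assume "i \<in> {..<k}" "i' \<in> {..<k}" "c i = c i'"
    then show "i = i'"
      using teval_eq_0_if_vars_coincide[OF assms(5,2), of i i' "matrix_unit \<circ> c" ij] c by auto
  qed
  have "{..<k} \<subseteq> {..<CARD('d)^2}"
    using assms(1) by auto
  moreover have "card {..<CARD('d)^2} \<le> card (UNIV :: ('d \<times> 'd) set)"
    by (simp add: power2_eq_square)
  ultimately obtain \<beta> where \<beta>: "inj_on \<beta> {..<CARD('d)^2}" "\<forall>i\<in>{..<k}. \<beta> i = c i"
    using inj_on_extend_into[OF inj subset_UNIV _ finite_lessThan finite] by blast
  have "teval (matrix_unit \<circ> \<beta>) f = teval (matrix_unit \<circ> c) f"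
    using \<beta>(2) by (intro teval_cong_vars[OF assms(3)]) simp
  then have "teval (matrix_unit \<circ> \<beta>) (Phi (CARD('d)^2) k f) (ij @ map \<beta> [k..<CARD('d)^2])
      = of_nat (fact k) * teval (matrix_unit \<circ> c) f ij"
    using teval_Phi_at_matrix_units[OF assms(5,2,1) \<beta>(1)] by simp
  then have "teval (matrix_unit \<circ> \<beta>) (Phi (CARD('d)^2) k f) (ij @ map \<beta> [k..<CARD('d)^2]) \<noteq> 0"
    using c by simp
  then show ?thesis
    by blast
qed

theorem mainTheorem8:
  fixes f :: "'a::field_char_0 tpoly" and n k :: nat
  assumes "k \<le> CARD('d::finite)^2"
    and "is_tpoly n f"
    and "vars_in {..<k} f"
    and "multilinear_in k f"
    and "antisym_in k f"
  shows "(\<exists>A :: nat \<Rightarrow> 'a^'d^'d. teval A f \<noteq> (\<lambda>_. 0))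
     \<longleftrightarrow> (\<exists>A :: nat \<Rightarrow> 'a^'d^'d. teval A (Phi (CARD('d)^2) k f) \<noteq> (\<lambda>_. 0))"
proof -
  have fin: "finite (tsupp f)"
    using assms(2) by (simp add: is_tpoly_def)
  show ?thesis
  proof
    assume "\<exists>A :: nat \<Rightarrow> 'a^'d^'d. teval A f \<noteq> (\<lambda>_. 0)"
    then obtain A :: "nat \<Rightarrow> 'a^'d^'d" and ij where "teval A f ij \<noteq> 0"
      by (auto simp: fun_eq_iff)
    with teval_Phi_nonzero[OF assms(1) fin assms(3-5)] obtain \<beta> where
      "teval (matrix_unit \<circ> \<beta>) (Phi (CARD('d)^2) k f) (ij @ map \<beta> [k..<CARD('d)^2]) \<noteq> 0"
      by blast
    then show "\<exists>A :: nat \<Rightarrow> 'a^'d^'d. teval A (Phi (CARD('d)^2) k f) \<noteq> (\<lambda>_. 0)"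
      by (intro exI[of _ "matrix_unit \<circ> \<beta>"]) auto
  next
    assume "\<exists>A :: nat \<Rightarrow> 'a^'d^'d. teval A (Phi (CARD('d)^2) k f) \<noteq> (\<lambda>_. 0)"
    then show "\<exists>A :: nat \<Rightarrow> 'a^'d^'d. teval A f \<noteq> (\<lambda>_. 0)"
      using teval_Phi_eq_0[OF fin] by blast
  qed
qed

end
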